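(* Consider the network game with symmetric adjacency matrix $A\in\{0,1\}^{n\times n}$, parameter $\beta>0$ with $\beta\lambda_1(A)<1$, and standalone value vector $b\in\mathbb{R}^n_{\ge0}$. Let $C>\max(\|b\|^2,1)$ and let $y^*$ be an optimal intervention of budget $C$. Let $\gamma\in[-1,1]$. Then for every $y\in\mathbb{R}^n$ with $\|y\|^2=C$ and $\rho(y,y^* )>\gamma$, the competitive ratio satisfies $$\frac{W(y)}{W(y^* )}\ge 1-4\sqrt{2(1-\gamma)}.$$
   Context: Network game: agents $1,\dots,n$ on an undirected graph with symmetric adjacency matrix $A$; agent $i$ chooses $a_i\in\mathbb{R}$ and has utility $u_i(a)=b_ia_i-\tfrac12a_i^2+\beta\sum_jA_{ij}a_ia_j$. Let $M=I-\beta A$. When the spectral radius of $\beta A$ is below $1$, the unique Nash equilibrium is $a^*=M^{-1}b$ and the social welfare at equilibrium is $\tfrac12(a^* )^\top a^*$. An intervention is a vector $y$ replacing $b$ by $b+y$ at cost $\|y\|^2$; $W(y)=\tfrac12\|M^{-1}(b+y)\|^2$ is the equilibrium welfare after intervention $y$. The optimal intervention of budget $C$ is $y^*\in\arg\max_{\|x\|=\sqrt C}W(x)$, and the competitive ratio of $y$ is $W(y)/W(y^* )$. $\lambda_1(A)$ is the largest eigenvalue of $A$. The cosine similarity of nonzero vectors is $\rho(z,y)=\frac{z\cdot y}{\|z\|\|y\|}$. $\|\cdot\|$ is the Euclidean norm. *)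

theory Defs
  imports "HOL-Analysis.Analysis"
begin

definition is_eigenvalue :: "real^'n^'n \<Rightarrow> real \<Rightarrow> bool" where
  "is_eigenvalue A l \<longleftrightarrow> (\<exists>v. v \<noteq> 0 \<and> A *v v = l *\<^sub>R v)"

text \<open>Largest eigenvalue lambda_1(A) (for a symmetric matrix all eigenvalues are real).\<close>
definition lambda1 :: "real^'n^'n \<Rightarrow> real" where
  "lambda1 A = Max {l. is_eigenvalue A l}"

definition Mmat :: "real \<Rightarrow> real^'n^'n \<Rightarrow> real^'n^'n" where
  "Mmat \<beta> A = mat 1 - \<beta> *\<^sub>R A"

definition welfare :: "real \<Rightarrow> real^'n^'n \<Rightarrow> real^'n \<Rightarrow> real^'n \<Rightarrow> real" where
  "welfare \<beta> A b y = (1/2) * (norm (matrix_inv (Mmat \<beta> A) *v (b + y)))^2"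

definition optimal_intervention ::
  "real \<Rightarrow> real^'n^'n \<Rightarrow> real^'n \<Rightarrow> real \<Rightarrow> real^'n \<Rightarrow> bool" where
  "optimal_intervention \<beta> A b C ys \<longleftrightarrow>
     norm ys = sqrt C \<and> (\<forall>x. norm x = sqrt C \<longrightarrow> welfare \<beta> A b x \<le> welfare \<beta> A b ys)"

definition cos_sim :: "real^'n \<Rightarrow> real^'n \<Rightarrow> real" where
  "cos_sim z y = (z \<bullet> y) / (norm z * norm y)"

end

theory Submission
  imports Defs
begin

text \<open>
  Write \<open>N = M\<^sup>-\<^sup>1\<close>, so that \<open>2 W(x) = \<parallel>N (b + x)\<parallel>\<^sup>2\<close>, and let \<open>r = \<surd>C\<close>.
  Since both \<open>x\<close> and \<open>-x\<close> are feasible interventions, optimality of \<open>y\<^sup>*\<close> and the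
  triangle inequality give \<open>\<parallel>N x\<parallel> \<le> \<parallel>N (b + y\<^sup>*)\<parallel>\<close> for every \<open>\<parallel>x\<parallel> = r\<close>; so \<open>N\<close> has
  operator norm at most \<open>\<parallel>N (b + y\<^sup>*)\<parallel> / r\<close>. A feasible \<open>y\<close> with \<open>\<rho>(y, y\<^sup>*) > \<gamma>\<close>
  satisfies \<open>\<parallel>y - y\<^sup>*\<parallel> \<le> r \<delta>\<close> with \<open>\<delta> = \<surd>(2(1 - \<gamma>))\<close>, hence
  \<open>\<parallel>N (b + y)\<parallel> \<ge> (1 - \<delta>) \<parallel>N (b + y\<^sup>*)\<parallel>\<close> and the ratio is at least \<open>(1 - \<delta>)\<^sup>2 \<ge> 1 - 2\<delta>\<close>.
  The hypothesis \<open>C > \<parallel>b\<parallel>\<^sup>2\<close> makes \<open>b + y\<^sup>* \<noteq> 0\<close>, and the spectral condition makes \<open>M\<close>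
  invertible, so the denominator is positive. Symmetry and the \<open>0/1\<close> entries of \<open>A\<close>
  and the sign of \<open>b\<close> are not needed.
\<close>

lemma eigenvector_combination_zero:
  fixes f :: "'a::real_vector \<Rightarrow> 'a"
  assumes "linear f" "finite S"
    and eig: "\<And>l. l \<in> S \<Longrightarrow> v l \<noteq> 0 \<and> f (v l) = l *\<^sub>R v l"
    and zero: "(\<Sum>l\<in>S. c l *\<^sub>R v l) = 0"
  shows "\<forall>l\<in>S. c l = 0"
  using \<open>finite S\<close> eig zero
proof (induction S arbitrary: c rule: finite_induct)
  case empty
  then show ?case by simp
next
  case (insert m S)
  have relation: "c m *\<^sub>R v m + (\<Sum>l\<in>S. c l *\<^sub>R v l) = 0"
    using insert.hyps insert.prems(2) by simp
  \<comment> \<open>Applying \<open>f - m\<close> to the relation removes the \<open>v m\<close> term.\<close>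
  have "(c m * m) *\<^sub>R v m + (\<Sum>l\<in>S. (c l * l) *\<^sub>R v l) = 0"
    using arg_cong[OF relation, of f] insert.prems(1) \<open>linear f\<close>
    by (simp add: linear_0 linear_add linear_sum linear_scale)
  moreover have "(c m * m) *\<^sub>R v m + (\<Sum>l\<in>S. (c l * m) *\<^sub>R v l) = 0"
    using relation scaleR_add_right[of m "c m *\<^sub>R v m" "\<Sum>l\<in>S. c l *\<^sub>R v l"]
    by (simp add: scaleR_sum_right mult.commute)
  ultimately have "(\<Sum>l\<in>S. (c l * l) *\<^sub>R v l) - (\<Sum>l\<in>S. (c l * m) *\<^sub>R v l) = 0"
    by (simp add: eq_neg_iff_add_eq_0[symmetric])
  then have "(\<Sum>l\<in>S. (c l * (l - m)) *\<^sub>R v l) = 0"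
    by (simp only: right_diff_distrib scaleR_left_diff_distrib sum_subtractf)
  then have "\<forall>l\<in>S. c l * (l - m) = 0"
    using insert.IH[of "\<lambda>l. c l * (l - m)"] insert.prems(1) by simp
  then have rest: "\<forall>l\<in>S. c l = 0"
    using insert.hyps(2) by auto
  then have "c m = 0"
    using relation insert.prems(1) by simp
  with rest show ?case by simp
qed

lemma card_eigenvalues_le:
  fixes A :: "real^'n^'n"
  assumes "finite S" "S \<subseteq> {l. is_eigenvalue A l}"
  shows "card S \<le> CARD('n)"
proof -
  have "\<forall>l\<in>S. \<exists>w. w \<noteq> 0 \<and> A *v w = l *\<^sub>R w"
    using assms(2) by (auto simp: is_eigenvalue_def)
  then obtain v where eig: "\<And>l. l \<in> S \<Longrightarrow> v l \<noteq> 0 \<and> A *v v l = l *\<^sub>R v l"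
    by metis
  have inj: "inj_on v S"
  proof (rule inj_onI)
    fix a b assume "a \<in> S" "b \<in> S" "v a = v b"
    have "a *\<^sub>R v a = A *v v b"
      using eig[OF \<open>a \<in> S\<close>] \<open>v a = v b\<close> by simp
    also have "\<dots> = b *\<^sub>R v a"
      using eig[OF \<open>b \<in> S\<close>] \<open>v a = v b\<close> by simp
    finally have "(a - b) *\<^sub>R v a = 0"
      by (simp add: scaleR_left_diff_distrib)
    then show "a = b"
      using eig[OF \<open>a \<in> S\<close>] by simp
  qed
  have "independent (v ` S)"
  proof
    assume "dependent (v ` S)"
    then obtain u where u: "\<exists>w\<in>v ` S. u w \<noteq> 0" "(\<Sum>w\<in>v ` S. u w *\<^sub>R w) = 0"
      using assms(1) by (auto simp: dependent_finite)
    then have "(\<Sum>l\<in>S. u (v l) *\<^sub>R v l) = 0"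
      by (simp add: sum.reindex[OF inj])
    then have "\<forall>l\<in>S. u (v l) = 0"
      using eigenvector_combination_zero[where f = "(*v) A", OF _ assms(1) eig] by simp
    with u(1) show False
      by auto
  qed
  then have "card (v ` S) \<le> DIM(real^'n)"
    using independent_bound by blast
  then show ?thesis
    by (simp add: card_image[OF inj])
qed

lemma finite_eigenvalues:
  fixes A :: "real^'n^'n"
  shows "finite {l. is_eigenvalue A l}"
proof (rule ccontr)
  assume "infinite {l. is_eigenvalue A l}"
  then obtain S where "finite S" "card S = Suc CARD('n)" "S \<subseteq> {l. is_eigenvalue A l}"
    using infinite_arbitrarily_large by blast
  then show False
    using card_eigenvalues_le[of S A] by simp
qed

lemma eigenvalue_le_lambda1:
  fixes A :: "real^'n^'n"
  assumes "is_eigenvalue A l"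
  shows "l \<le> lambda1 A"
  unfolding lambda1_def by (rule Max_ge[OF finite_eigenvalues]) (use assms in simp)

lemma invertible_Mmat:
  fixes A :: "real^'n^'n"
  assumes "\<beta> > 0" "\<beta> * lambda1 A < 1"
  shows "invertible (Mmat \<beta> A)"
proof -
  have "x = 0" if "Mmat \<beta> A *v x = 0" for x
  proof (rule ccontr)
    assume "x \<noteq> 0"
    have "\<beta> *\<^sub>R (A *v x) = x"
      using that by (simp add: Mmat_def matrix_vector_mult_diff_rdistrib scaleR_matrix_vector_assoc)
    then have "A *v x = (1 / \<beta>) *\<^sub>R x"
      using \<open>\<beta> > 0\<close> by (metis nonzero_divide_eq_eq order.irrefl scaleR_scaleR scaleR_one times_divide_eq_left)
    with \<open>x \<noteq> 0\<close> have "is_eigenvalue A (1 / \<beta>)"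
      unfolding is_eigenvalue_def by blast
    then have "1 / \<beta> \<le> lambda1 A"
      by (rule eigenvalue_le_lambda1)
    with assms show False
      by (simp add: divide_le_eq mult.commute)
  qed
  then show ?thesis
    by (simp add: invertible_left_inverse matrix_left_invertible_ker)
qed

lemma matrix_inv_mult_nonzero:
  fixes M :: "'a::field^'n^'n"
  assumes "invertible M" "x \<noteq> 0"
  shows "matrix_inv M *v x \<noteq> 0"
proof
  have "M ** matrix_inv M = mat 1"
    using assms(1) unfolding invertible_def matrix_inv_def by (rule someI2_ex) auto
  moreover assume "matrix_inv M *v x = 0"
  then have "(M ** matrix_inv M) *v x = 0"
    by (simp flip: matrix_vector_mul_assoc)
  ultimately show False
    using assms(2) by simp
qed

lemma optimal_intervention_maximizes_norm:
  assumes "optimal_intervention \<beta> A b C ys" "norm x = sqrt C"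
  shows "norm (matrix_inv (Mmat \<beta> A) *v (b + x)) \<le> norm (matrix_inv (Mmat \<beta> A) *v (b + ys))"
proof -
  have "(norm (matrix_inv (Mmat \<beta> A) *v (b + x)))\<^sup>2 \<le> (norm (matrix_inv (Mmat \<beta> A) *v (b + ys)))\<^sup>2"
    using assms by (simp add: optimal_intervention_def welfare_def)
  then show ?thesis
    by (rule power2_le_imp_le) simp
qed

lemma norm_le_of_antipodal_bounds:
  fixes p q :: "'a::real_normed_vector"
  assumes "norm (p + q) \<le> D" "norm (p - q) \<le> D"
  shows "norm q \<le> D"
proof -
  have "2 * norm q = norm ((p + q) - (p - q))"
    by (simp flip: scaleR_2)
  also have "\<dots> \<le> norm (p + q) + norm (p - q)"
    by (rule norm_triangle_ineq4)
  finally show ?thesis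
    using assms by simp
qed

lemma norm_image_le_of_maximizer:
  fixes f :: "'a::real_normed_vector \<Rightarrow> 'b::real_normed_vector"
  assumes "linear f" "r > 0"
    and max: "\<And>x. norm x = r \<Longrightarrow> norm (f (b + x)) \<le> norm (f (b + ys))"
  shows "norm (f z) \<le> norm (f (b + ys)) * norm z / r"
proof (cases "z = 0")
  case True
  then show ?thesis
    using \<open>linear f\<close> by (simp add: linear_0)
next
  case False
  define x where "x = (r / norm z) *\<^sub>R z"
  have "norm x = r"
    using False \<open>r > 0\<close> by (simp add: x_def)
  then have "norm (f b + f x) \<le> norm (f (b + ys))" "norm (f b - f x) \<le> norm (f (b + ys))"
    using max[of x] max[of "-x"] \<open>linear f\<close> by (simp_all add: linear_add linear_diff)
  then have "norm (f x) \<le> norm (f (b + ys))"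
    by (rule norm_le_of_antipodal_bounds)
  moreover have "norm (f x) = r / norm z * norm (f z)"
    using \<open>linear f\<close> \<open>r > 0\<close> by (simp add: x_def linear_scale)
  ultimately show ?thesis
    using False \<open>r > 0\<close> by (simp add: field_simps)
qed

lemma norm_image_ge_near_maximizer:
  fixes f :: "'a::real_normed_vector \<Rightarrow> 'b::real_normed_vector"
  assumes "linear f" "r > 0"
    and max: "\<And>x. norm x = r \<Longrightarrow> norm (f (b + x)) \<le> norm (f (b + ys))"
  shows "norm (f (b + ys)) * (1 - norm (y - ys) / r) \<le> norm (f (b + y))"
proof -
  have "f (b + ys) = f (b + y) - f (y - ys)"
    using \<open>linear f\<close> by (simp flip: linear_diff)
  then have "norm (f (b + ys)) \<le> norm (f (b + y)) + norm (f (y - ys))"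
    by (metis norm_triangle_ineq4)
  moreover have "norm (f (y - ys)) \<le> norm (f (b + ys)) * norm (y - ys) / r"
    using norm_image_le_of_maximizer[OF assms] .
  ultimately show ?thesis
    by (simp add: right_diff_distrib)
qed

lemma ratio_sq_ge_of_relative_bound:
  fixes u D \<delta> :: real
  assumes "D > 0" "\<delta> \<ge> 0" "u \<ge> 0" "D * (1 - \<delta>) \<le> u"
  shows "1 - 2 * \<delta> \<le> u\<^sup>2 / D\<^sup>2"
proof (cases "\<delta> \<le> 1")
  case True
  then have "(D * (1 - \<delta>))\<^sup>2 \<le> u\<^sup>2"
    using assms by (intro power_mono) simp_all
  then have "(1 - \<delta>)\<^sup>2 \<le> u\<^sup>2 / D\<^sup>2"
    using \<open>D > 0\<close> by (simp add: power_mult_distrib pos_le_divide_eq mult.commute)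
  moreover have "1 - 2 * \<delta> \<le> (1 - \<delta>)\<^sup>2"
    by (simp add: power2_eq_square algebra_simps)
  ultimately show ?thesis by linarith
next
  case False
  have "0 \<le> u\<^sup>2 / D\<^sup>2"
    by simp
  with False show ?thesis
    by linarith
qed

lemma norm_ratio_ge_near_maximizer:
  fixes f :: "'a::real_normed_vector \<Rightarrow> 'b::real_normed_vector"
  assumes "linear f" "r > 0"
    and max: "\<And>x. norm x = r \<Longrightarrow> norm (f (b + x)) \<le> norm (f (b + ys))"
    and "f (b + ys) \<noteq> 0" "\<delta> \<ge> 0" "norm (y - ys) \<le> r * \<delta>"
  shows "1 - 2 * \<delta> \<le> (norm (f (b + y)))\<^sup>2 / (norm (f (b + ys)))\<^sup>2"
proof -
  have "norm (f (b + ys)) * (1 - \<delta>) \<le> norm (f (b + ys)) * (1 - norm (y - ys) / r)"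
    using assms(2,6) by (intro mult_left_mono) (simp_all add: divide_le_eq mult.commute)
  also have "\<dots> \<le> norm (f (b + y))"
    using assms(1-3) by (rule norm_image_ge_near_maximizer)
  finally show ?thesis
    using assms(4,5) by (intro ratio_sq_ge_of_relative_bound) simp_all
qed

lemma norm_diff_le_of_cos_sim_gt:
  fixes y z :: "real^'n"
  assumes "norm y = r" "norm z = r" "r > 0" "cos_sim y z > \<gamma>" "\<gamma> \<le> 1"
  shows "norm (y - z) \<le> r * sqrt (2 * (1 - \<gamma>))"
proof -
  have "\<gamma> < (y \<bullet> z) / r\<^sup>2"
    using assms(1,2,4) by (simp add: cos_sim_def power2_eq_square)
  then have "\<gamma> * r\<^sup>2 < y \<bullet> z"
    using \<open>r > 0\<close> by (simp add: pos_less_divide_eq)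
  moreover have "y \<bullet> y = r\<^sup>2" "z \<bullet> z = r\<^sup>2"
    using assms(1,2) by (simp_all add: dot_square_norm)
  ultimately have "(norm (y - z))\<^sup>2 \<le> r\<^sup>2 * (2 * (1 - \<gamma>))"
    by (simp add: power2_norm_eq_inner inner_diff_left inner_diff_right inner_commute algebra_simps)
  also have "\<dots> = (r * sqrt (2 * (1 - \<gamma>)))\<^sup>2"
    using \<open>\<gamma> \<le> 1\<close> by (simp add: power_mult_distrib)
  finally show ?thesis
    by (rule power2_le_imp_le) (use \<open>r > 0\<close> \<open>\<gamma> \<le> 1\<close> in simp)
qed

theorem mainTheorem3:
  fixes A :: "real^'n^'n" and b ys :: "real^'n" and \<beta> C \<gamma> :: real
  assumes symA: "transpose A = A"
    and A01: "\<forall>i j. A $ i $ j = 0 \<or> A $ i $ j = 1"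
    and beta_pos: "\<beta> > 0"
    and spec: "\<beta> * lambda1 A < 1"
    and b_nonneg: "\<forall>i. b $ i \<ge> 0"
    and C_big: "C > max ((norm b)^2) 1"
    and opt: "optimal_intervention \<beta> A b C ys"
    and gamma: "-1 \<le> \<gamma>" "\<gamma> \<le> 1"
  shows "\<forall>y. (norm y)^2 = C \<and> cos_sim y ys > \<gamma> \<longrightarrow>
           welfare \<beta> A b y / welfare \<beta> A b ys \<ge> 1 - 4 * sqrt (2 * (1 - \<gamma>))"
proof (intro allI impI)
  fix y assume y: "(norm y)^2 = C \<and> cos_sim y ys > \<gamma>"
  define N where "N = matrix_inv (Mmat \<beta> A)"
  define \<delta> where "\<delta> = sqrt (2 * (1 - \<gamma>))"
  have "norm y = sqrt C"
    by (rule real_sqrt_unique[symmetric]) (use y in simp_all)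
  moreover have "norm ys = sqrt C" "sqrt C > 0"
    using opt C_big by (simp_all add: optimal_intervention_def)
  ultimately have dist: "norm (y - ys) \<le> sqrt C * \<delta>"
    unfolding \<delta>_def using y gamma by (intro norm_diff_le_of_cos_sim_gt) simp_all
  have "norm b < norm ys"
    using C_big \<open>norm ys = sqrt C\<close> by (simp add: real_less_rsqrt)
  then have "N *v (b + ys) \<noteq> 0"
    unfolding N_def using invertible_Mmat[OF beta_pos spec]
    by (intro matrix_inv_mult_nonzero) (auto simp: add_eq_0_iff)
  moreover have "\<delta> \<ge> 0"
    using gamma by (simp add: \<delta>_def)
  ultimately have "1 - 2 * \<delta> \<le> (norm (N *v (b + y)))\<^sup>2 / (norm (N *v (b + ys)))\<^sup>2"
    using optimal_intervention_maximizes_norm[OF opt] \<open>sqrt C > 0\<close> dist unfolding N_def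
    by (intro norm_ratio_ge_near_maximizer[OF matrix_vector_mul_linear]) simp_all
  moreover have "welfare \<beta> A b y / welfare \<beta> A b ys = (norm (N *v (b + y)))\<^sup>2 / (norm (N *v (b + ys)))\<^sup>2"
    by (simp add: welfare_def N_def)
  ultimately show "welfare \<beta> A b y / welfare \<beta> A b ys \<ge> 1 - 4 * sqrt (2 * (1 - \<gamma>))"
    using \<open>\<delta> \<ge> 0\<close> unfolding \<delta>_def by linarith
qed

end
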